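(* Let $k\ge 2$ be an integer such that the trinomial $T_k(x)=x^k+x+1$ is primitive over $\mathbb{F}_2$, and let $M_k$ be the binary cyclic word defined in the context. Then $\operatorname{cBWT}(M_k)=1\,(0011)^{2^{k-2}-1}\,010$.
   Context: Define $F:\{0,1\}^k\to\{0,1\}^k$ by $F(x_0,\dots,x_{k-1})=(x_1,\dots,x_{k-1},x_0\oplus x_1)$ (the Fibonacci-form linear-feedback shift register of the recurrence $s_{t+k}=s_{t+1}\oplus s_t$ induced by $T_k$). Define $F'$ to agree with $F$ except that $F'(0^k)=0^{k-1}1$ and $F'(10^{k-1})=0^k$ (the successors of the conjugate pair $0^k,10^{k-1}$ are swapped). Since $T_k$ is primitive, $F'$ is a single cycle on all $2^k$ states. Choose any state $x_0$, set $x_{t+1}=F'(x_t)$, and let $w$ be the cyclic binary word of length $2^k$ with $w[t]$ equal to the first coordinate of $x_t$ ($w$ is a binary de Bruijn cycle of order $k$: every word of $\{0,1\}^k$ occurs exactly once as a cyclic window). $M_k$ is the cyclic word obtained from $w$ by reversing it and then complementing every bit ($0\leftrightarrow1$). For a word $u$ of length $n$, $\operatorname{cBWT}(u)$ is the last column of the $n\times n$ matrix whose rows are the $n$ cyclic rotations of $u$ sorted lexicographically (with $0<1$); it depends only on the cycle. *)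

theory Defs
  imports Main "HOL-Library.Z2" "HOL-Library.List_Lexorder"
    "HOL-Computational_Algebra.Polynomial" "HOL-Computational_Algebra.Factorial_Ring"
begin

definition poly_order :: "bit poly \<Rightarrow> nat" where
  "poly_order p = (LEAST n. 0 < n \<and> p dvd (monom 1 n - 1))"

definition primitive_F2 :: "bit poly \<Rightarrow> bool" where
  "primitive_F2 p \<longleftrightarrow> irreducible p \<and> poly p 0 \<noteq> 0 \<and> poly_order p = 2 ^ degree p - 1"

definition trinomial :: "nat \<Rightarrow> bit poly" where
  "trinomial k = monom 1 k + monom 1 1 + 1"

text \<open>States are bit lists of length k (False = 0, True = 1).\<close>

definition lfsr_F :: "bool list \<Rightarrow> bool list" where
  "lfsr_F x = tl x @ [x ! 0 \<noteq> x ! 1]"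

definition lfsr_F' :: "nat \<Rightarrow> bool list \<Rightarrow> bool list" where
  "lfsr_F' k x =
     (if x = replicate k False then replicate (k - 1) False @ [True]
      else if x = True # replicate (k - 1) False then replicate k False
      else lfsr_F x)"

definition dB_word :: "nat \<Rightarrow> bool list \<Rightarrow> bool list" where
  "dB_word k x0 = map (\<lambda>t. hd ((lfsr_F' k ^^ t) x0)) [0..<2 ^ k]"

definition M_word :: "nat \<Rightarrow> bool list \<Rightarrow> bool list" where
  "M_word k x0 = map Not (rev (dB_word k x0))"

definition cBWT :: "bool list \<Rightarrow> bool list" where
  "cBWT u = map last (sort (map (\<lambda>i. rotate i u) [0..<length u]))"

end

theory Submission
  imports Defs
begin

(* Primitivity of T_k makes the shift register F run through all 2^k - 1 nonzero states in
   one cycle: its output sequence satisfies both the recurrence of T_k and that of x^n - 1 for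
   any period n, so T_k divides x^n - 1 and n is at least the order 2^k - 1 of x.  Swapping the
   successors of 0^k and 10^(k-1) splices 0^k into that cycle, so F' is a single 2^k-cycle and
   M_k contains every word of length k exactly once as a cyclic window.  Hence the sorted
   rotations of M_k are ordered by their length-k prefixes, which run through all words v in
   lexicographic order, and the last letter of the rotation starting with v is read off from
   the feedback bit of F' at the state rev (complement v).  Away from the two swapped states
   that bit is the XOR of the last two letters of v, which yields the period 1001 along the
   lexicographic order; the words belonging to the two swapped states are 1^(k-1)0 and 1^k,
   the last two in that order, where the final 01 turns into 10. *)

section \<open>Linear recurrences\<close>

(* poly_shift q s is q(E) s for the shift operator (E s) t = s (t + 1). *)
definition poly_shift :: "'a::comm_ring_1 poly \<Rightarrow> (nat \<Rightarrow> 'a) \<Rightarrow> nat \<Rightarrow> 'a" where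
  "poly_shift q s t = (\<Sum>i\<le>degree q. coeff q i * s (t + i))"

definition annihilates :: "'a::comm_ring_1 poly \<Rightarrow> (nat \<Rightarrow> 'a) \<Rightarrow> bool" where
  "annihilates q s \<longleftrightarrow> poly_shift q s = (\<lambda>_. 0)"

lemma poly_shift_conv_sum:
  "degree q < n \<Longrightarrow> poly_shift q s t = (\<Sum>i<n. coeff q i * s (t + i))"
  unfolding poly_shift_def by (rule sum.mono_neutral_left) (auto simp: coeff_eq_0)

lemma poly_shift_add: "poly_shift (p + q) s t = poly_shift p s t + poly_shift q s t"
proof -
  let ?n = "Suc (max (degree p) (degree q))"
  have "degree (p + q) < ?n" "degree p < ?n" "degree q < ?n"
    using degree_add_le_max[of p q] by auto
  then show ?thesis
    by (simp only: poly_shift_conv_sum coeff_add distrib_right sum.distrib)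
qed

lemma poly_shift_diff: "poly_shift (p - q) s t = poly_shift p s t - poly_shift q s t"
  using poly_shift_add[of "p - q" q s t] by (simp add: algebra_simps)

lemma poly_shift_smult: "poly_shift (smult c p) s t = c * poly_shift p s t"
proof -
  have "degree (smult c p) < Suc (degree p)" "degree p < Suc (degree p)"
    using degree_smult_le[of c p] by auto
  then show ?thesis
    by (simp only: poly_shift_conv_sum coeff_smult mult.assoc sum_distrib_left)
qed

lemma poly_shift_pCons: "poly_shift (pCons c p) s t = c * s t + poly_shift p s (Suc t)"
proof -
  have "degree (pCons c p) < Suc (Suc (degree p))" "degree p < Suc (degree p)"
    using degree_pCons_le[of c p] by auto
  then show ?thesis
    by (simp only: poly_shift_conv_sum sum.lessThan_Suc_shift coeff_pCons_0 coeff_pCons_Suc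
        add_0_right add_Suc_shift add_Suc_right)
qed

lemma poly_shift_mult: "poly_shift (a * q) s = poly_shift a (poly_shift q s)"
proof
  show "poly_shift (a * q) s t = poly_shift a (poly_shift q s) t" for t
  proof (induction a arbitrary: t rule: pCons_induct)
    case 0
    then show ?case by (simp add: poly_shift_def)
  next
    case (pCons c a)
    have "pCons c a * q = smult c q + pCons 0 (a * q)" by simp
    then show ?case by (simp add: poly_shift_add poly_shift_smult poly_shift_pCons pCons.IH)
  qed
qed

lemma poly_shift_1 [simp]: "poly_shift 1 s = s"
  by (simp add: poly_shift_def fun_eq_iff)

lemma poly_shift_monom: "poly_shift (monom c n) s t = c * s (t + n)"
proof (induction n arbitrary: t)
  case 0
  have "poly_shift (monom c 0) s t = c * s t + poly_shift 0 s (Suc t)"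
    by (simp only: monom_0 poly_shift_pCons)
  then show ?case by (simp add: poly_shift_def)
next
  case (Suc n)
  then show ?case by (simp add: monom_Suc poly_shift_pCons)
qed

lemma annihilates_mult: "annihilates q s \<Longrightarrow> annihilates (a * q) s"
  by (simp add: annihilates_def poly_shift_mult poly_shift_def fun_eq_iff)

lemma annihilates_diff: "annihilates p s \<Longrightarrow> annihilates q s \<Longrightarrow> annihilates (p - q) s"
  by (simp add: annihilates_def fun_eq_iff poly_shift_diff)

lemma annihilates_monom_minus_1_iff:
  "annihilates (monom 1 n - 1) s \<longleftrightarrow> (\<forall>t. s (t + n) = s t)"
  by (simp add: annihilates_def fun_eq_iff poly_shift_diff poly_shift_monom)

lemma annihilator_ideal_principal:
  fixes p :: "'a::field poly"
  assumes "annihilates p s" "p \<noteq> 0"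
  obtains q where "annihilates q s" "\<And>r. annihilates r s \<Longrightarrow> q dvd r"
proof -
  obtain q where q: "annihilates q s" "q \<noteq> 0"
    and least: "\<And>r. annihilates r s \<Longrightarrow> r \<noteq> 0 \<Longrightarrow> degree q \<le> degree r"
    using ex_has_least_nat[of "\<lambda>q. annihilates q s \<and> q \<noteq> 0" p degree] assms by blast
  have "q dvd r" if r: "annihilates r s" for r
  proof -
    have "r mod q = r - r div q * q" by (simp add: minus_div_mult_eq_mod)
    then have "annihilates (r mod q) s" by (simp add: annihilates_diff annihilates_mult q(1) r)
    then have "r mod q = 0" using least[of "r mod q"] degree_mod_less[OF q(2), of r] by linarith
    then show ?thesis by (simp add: mod_eq_0_iff_dvd)
  qed
  with q(1) show ?thesis by (rule that)
qed

lemma irreducible_annihilator_dvd: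
  fixes p r :: "'a::field poly"
  assumes irr: "irreducible p" and "annihilates p s" "annihilates r s" and "s \<noteq> (\<lambda>_. 0)"
  shows "p dvd r"
proof -
  have "p \<noteq> 0" using irr by auto
  obtain q where q: "annihilates q s" and q_dvd: "\<And>r. annihilates r s \<Longrightarrow> q dvd r"
    using annihilator_ideal_principal[OF \<open>annihilates p s\<close> \<open>p \<noteq> 0\<close>] by blast
  obtain u where p: "p = q * u" using q_dvd \<open>annihilates p s\<close> by blast
  show ?thesis using irreducibleD[OF irr p]
  proof
    assume "is_unit q"
    then have "annihilates 1 s" using annihilates_mult[OF q, of "1 div q"] by simp
    with \<open>s \<noteq> (\<lambda>_. 0)\<close> show ?thesis by (simp add: annihilates_def)
  next
    assume "is_unit u"
    then have "p dvd q" using p by (simp add: mult_unit_dvd_iff)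
    also have "q dvd r" using q_dvd \<open>annihilates r s\<close> .
    finally show ?thesis .
  qed
qed

section \<open>Shift registers\<close>

locale shift_register =
  fixes k :: nat and G :: "'a list \<Rightarrow> 'a list" and g :: "'a list \<Rightarrow> 'a"
  assumes pos: "0 < k" and step: "length y = k \<Longrightarrow> G y = tl y @ [g y]"
begin

lemma length_funpow: "length x = k \<Longrightarrow> length ((G ^^ t) x) = k"
  by (induction t) (simp_all add: step pos)

lemma nth_funpow:
  assumes x: "length x = k"
  shows "j < k \<Longrightarrow> (G ^^ t) x ! j = hd ((G ^^ (t + j)) x)"
proof (induction j arbitrary: t)
  case 0
  then show ?case using length_funpow[OF x, of t] by (cases "(G ^^ t) x") auto
next
  case (Suc j)
  have "(G ^^ t) x ! Suc j = (G ^^ Suc t) x ! j"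
    using length_funpow[OF x, of t] Suc.prems by (auto simp: step nth_append nth_tl)
  then show ?case using Suc.IH[of "Suc t"] Suc.prems by (metis Suc_lessD add_Suc_shift)
qed

lemma hd_funpow_add:
  assumes x: "length x = k"
  shows "hd ((G ^^ (t + k)) x) = g ((G ^^ t) x)"
proof -
  have "hd ((G ^^ (t + k)) x) = (G ^^ Suc t) x ! (k - 1)"
    using nth_funpow[OF x, of "k - 1" "Suc t"] pos by simp
  also have "\<dots> = g ((G ^^ t) x)"
    using length_funpow[OF x, of t] pos by (simp add: step nth_append)
  finally show ?thesis .
qed

end

lemma funpow_cycle_from_any_point:
  assumes cyc: "(f ^^ n) a = a" and covers: "\<And>y. y \<in> S \<Longrightarrow> \<exists>j<n. (f ^^ j) a = y"
    and x: "x \<in> S"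
  shows "(f ^^ n) x = x" and "y \<in> S \<Longrightarrow> \<exists>m<n. (f ^^ m) x = y"
proof -
  obtain i where i: "i < n" "(f ^^ i) a = x" using covers[OF x] by blast
  have x_shift: "(f ^^ m) x = (f ^^ (m + i)) a" for m using i(2) by (simp add: funpow_add)
  show "(f ^^ n) x = x"
    using x_shift[of n] i(2) cyc by (simp add: funpow_add add.commute)
  assume "y \<in> S"
  then obtain j where j: "j < n" "(f ^^ j) a = y" using covers by blast
  define m where "m = (j + n - i) mod n"
  have "(m + i) mod n = j"
    using i(1) j(1) by (simp add: m_def mod_add_left_eq)
  then have "(f ^^ m) x = y"
    using x_shift[of m] funpow_mod_eq[OF cyc, of "m + i"] j(2) by simp
  moreover have "m < n" using i(1) by (simp add: m_def)
  ultimately show "\<exists>m<n. (f ^^ m) x = y" by blast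
qed

section \<open>The trinomial register and its single-cycle modification\<close>

lemma degree_trinomial: "2 \<le> k \<Longrightarrow> degree (trinomial k) = k"
  unfolding trinomial_def by (simp add: degree_add_eq_left degree_monom_eq)

lemma shift_register_lfsr_F: "2 \<le> k \<Longrightarrow> shift_register k lfsr_F (\<lambda>y. y ! 0 \<noteq> y ! 1)"
  by unfold_locales (simp_all add: lfsr_F_def)

lemma shift_register_lfsr_F':
  assumes "2 \<le> k" shows "shift_register k (lfsr_F' k) (\<lambda>y. last (lfsr_F' k y))"
proof
  fix y :: "bool list" assume "length y = k"
  with assms show "lfsr_F' k y = tl y @ [last (lfsr_F' k y)]"
    by (cases k) (auto simp: lfsr_F'_def lfsr_F_def replicate_append_same)
qed (use assms in simp)

lemma lfsr_F_nonzero: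
  assumes "2 \<le> length y" "True \<in> set y" shows "True \<in> set (lfsr_F y)"
  using assms by (cases y; cases "tl y") (auto simp: lfsr_F_def)

locale primitive_trinomial_lfsr =
  fixes k :: nat
  assumes two_le_k: "2 \<le> k" and primitive: "primitive_F2 (trinomial k)"
begin

abbreviation F :: "bool list \<Rightarrow> bool list" where "F \<equiv> lfsr_F"
abbreviation F' :: "bool list \<Rightarrow> bool list" where "F' \<equiv> lfsr_F' k"

sublocale F: shift_register k F "\<lambda>y. y ! 0 \<noteq> y ! 1"
  using shift_register_lfsr_F[OF two_le_k] .

sublocale F': shift_register k F' "\<lambda>y. last (F' y)"
  using shift_register_lfsr_F'[OF two_le_k] .

definition nonzero_states :: "bool list set" where
  "nonzero_states = {y. length y = k \<and> True \<in> set y}"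

definition conj_state :: "bool list" where
  "conj_state = True # replicate (k - 1) False"

definition start_state :: "bool list" where
  "start_state = replicate (k - 1) False @ [True]"

lemma card_nonzero_states: "card nonzero_states = 2 ^ k - 1"
proof -
  have "True \<in> set y \<longleftrightarrow> y \<noteq> replicate (length y) False" for y :: "bool list"
    by (induction y) auto
  then have "nonzero_states = {y. set y \<subseteq> UNIV \<and> length y = k} - {replicate k False}"
    by (auto simp: nonzero_states_def)
  then show ?thesis using card_lists_length_eq[of "UNIV :: bool set" k]
    by (simp add: card_Diff_singleton finite_lists_length_eq)
qed

lemma F_funpow_nonzero:
  assumes "y \<in> nonzero_states" shows "(F ^^ n) y \<in> nonzero_states"
proof (induction n)
  case (Suc n)
  have "length ((F ^^ Suc n) y) = k"
    using assms F.length_funpow[of y "Suc n"] by (simp add: nonzero_states_def)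
  with Suc two_le_k show ?case by (auto simp: nonzero_states_def lfsr_F_nonzero)
qed (use assms in simp)

lemma F_period_ge:
  assumes y: "y \<in> nonzero_states" and n: "0 < n" "(F ^^ n) y = y"
  shows "2 ^ k - 1 \<le> n"
proof -
  have len: "length y = k" using y by (simp add: nonzero_states_def)
  define s :: "nat \<Rightarrow> bit" where "s t = of_bool (hd ((F ^^ t) y))" for t
  have rec: "hd ((F ^^ (t + k)) y) \<longleftrightarrow> hd ((F ^^ t) y) \<noteq> hd ((F ^^ Suc t) y)" for t
    using F.hd_funpow_add[OF len, of t] F.nth_funpow[OF len, of 0 t] F.nth_funpow[OF len, of 1 t]
      two_le_k by simp
  have "poly_shift (trinomial k) s t = 0" for t
    using rec[of t] by (cases "hd ((F ^^ t) y)"; cases "hd ((F ^^ Suc t) y)")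
      (simp_all add: s_def trinomial_def poly_shift_add poly_shift_monom)
  then have trinomial: "annihilates (trinomial k) s" by (simp add: annihilates_def fun_eq_iff)
  have "s (t + n) = s t" for t by (simp add: s_def funpow_add n(2))
  then have period: "annihilates (monom 1 n - 1) s" by (simp add: annihilates_monom_minus_1_iff)
  obtain j where "j < k" "y ! j" using y by (auto simp: nonzero_states_def in_set_conv_nth)
  then have "s j \<noteq> 0" using F.nth_funpow[OF len, of j 0] by (simp add: s_def)
  then have "trinomial k dvd monom 1 n - 1"
    using irreducible_annihilator_dvd[OF _ trinomial period] primitive
    by (auto simp: primitive_F2_def)
  then have "poly_order (trinomial k) \<le> n"
    unfolding poly_order_def using n(1) by (intro Least_le) simp
  then show ?thesis using primitive degree_trinomial[OF two_le_k] by (simp add: primitive_F2_def)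
qed

lemma four_le_two_pow: "4 \<le> (2::nat) ^ k"
  using power_increasing[of 2 k "2::nat"] two_le_k by simp

lemma start_state_nonzero: "start_state \<in> nonzero_states"
  using two_le_k by (simp add: start_state_def nonzero_states_def)

lemma conj_state_nonzero: "conj_state \<in> nonzero_states"
  using two_le_k by (simp add: conj_state_def nonzero_states_def)

lemma F_conj_state: "F conj_state = start_state"
  unfolding conj_state_def start_state_def lfsr_F_def using two_le_k by (cases "k - 1") auto

lemma F_orbit_distinct:
  assumes "i < j" "j < 2 ^ k - 1" shows "(F ^^ i) start_state \<noteq> (F ^^ j) start_state"
proof
  assume eq: "(F ^^ i) start_state = (F ^^ j) start_state"
  have "(F ^^ (j - i)) ((F ^^ i) start_state) = (F ^^ i) start_state"
    using assms(1) eq by (metis funpow_add comp_apply le_add_diff_inverse2 less_imp_le)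
  moreover have "0 < j - i" using assms(1) by simp
  ultimately have "2 ^ k - 1 \<le> j - i"
    using F_period_ge[OF F_funpow_nonzero[OF start_state_nonzero]] by blast
  with assms show False by simp
qed

lemma F_orbit_eq_nonzero_states:
  "(\<lambda>j. (F ^^ j) start_state) ` {..<2 ^ k - 1} = nonzero_states"
proof (rule card_subset_eq)
  show "finite nonzero_states"
    by (rule finite_subset[OF _ finite_lists_length_eq[of "UNIV :: bool set" k]])
      (auto simp: nonzero_states_def)
  show "(\<lambda>j. (F ^^ j) start_state) ` {..<2 ^ k - 1} \<subseteq> nonzero_states"
    using F_funpow_nonzero[OF start_state_nonzero] by auto
  have "inj_on (\<lambda>j. (F ^^ j) start_state) {..<2 ^ k - 1}"
  proof (rule inj_onI)
    fix i j assume "i \<in> {..<2 ^ k - 1}" "j \<in> {..<2 ^ k - 1}"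
      and "(F ^^ i) start_state = (F ^^ j) start_state"
    then show "i = j" using F_orbit_distinct[of i j] F_orbit_distinct[of j i]
      by (cases i j rule: linorder_cases) auto
  qed
  then show "card ((\<lambda>j. (F ^^ j) start_state) ` {..<2 ^ k - 1}) = card nonzero_states"
    by (simp add: card_image card_nonzero_states)
qed

lemma F_funpow_start_state: "(F ^^ (2 ^ k - 2)) start_state = conj_state"
proof -
  have "conj_state \<in> (\<lambda>j. (F ^^ j) start_state) ` {..<2 ^ k - 1}"
    unfolding F_orbit_eq_nonzero_states by (rule conj_state_nonzero)
  then obtain a where a: "a < 2 ^ k - 1" "(F ^^ a) start_state = conj_state"
    by (auto simp: image_iff)
  then have "(F ^^ Suc a) start_state = start_state" by (simp add: F_conj_state)
  then have "2 ^ k - 1 \<le> Suc a" by (rule F_period_ge[OF start_state_nonzero, rotated]) simp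
  with a(1) have "a = 2 ^ k - 2" by linarith
  with a(2) show ?thesis by simp
qed

lemma F'_eq_F: "y \<noteq> replicate k False \<Longrightarrow> y \<noteq> conj_state \<Longrightarrow> F' y = F y"
  by (simp add: lfsr_F'_def conj_state_def)

lemma F'_funpow_start_state: "j \<le> 2 ^ k - 2 \<Longrightarrow> (F' ^^ j) start_state = (F ^^ j) start_state"
proof (induction j)
  case (Suc j)
  have "j < 2 ^ k - 2" "2 ^ k - 2 < (2::nat) ^ k - 1"
    using Suc.prems four_le_two_pow by simp_all
  then have "(F ^^ j) start_state \<noteq> (F ^^ (2 ^ k - 2)) start_state" by (rule F_orbit_distinct)
  then have not_conj: "(F ^^ j) start_state \<noteq> conj_state" by (simp add: F_funpow_start_state)
  have "(F ^^ j) start_state \<noteq> replicate k False"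
    using F_funpow_nonzero[OF start_state_nonzero, of j] by (auto simp: nonzero_states_def)
  then have F'_step: "F' ((F ^^ j) start_state) = F ((F ^^ j) start_state)"
    using not_conj by (rule F'_eq_F)
  have "(F' ^^ Suc j) start_state = F' ((F' ^^ j) start_state)" by simp
  also have "\<dots> = F' ((F ^^ j) start_state)"
    using Suc.IH[OF Suc_leD[OF Suc.prems]] by (rule arg_cong)
  also have "\<dots> = (F ^^ Suc j) start_state" using F'_step by simp
  finally show ?case .
qed simp

lemma F'_zero_state: "F' (replicate k False) = start_state"
  by (simp add: lfsr_F'_def start_state_def)

lemma F'_conj_state: "F' conj_state = replicate k False"
  unfolding lfsr_F'_def conj_state_def using two_le_k by (cases k) auto

lemma F'_funpow_zero_state: "(F' ^^ (2 ^ k - 1)) start_state = replicate k False"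
proof -
  have "2 ^ k - 1 = Suc (2 ^ k - 2)" using four_le_two_pow by simp
  then show ?thesis
    using F'_funpow_start_state[of "2 ^ k - 2"] by (simp add: F_funpow_start_state F'_conj_state)
qed

lemma F'_orbit_period: "(F' ^^ 2 ^ k) start_state = start_state"
proof -
  have "2 ^ k = Suc (2 ^ k - 1)" using four_le_two_pow by simp
  then have "(F' ^^ 2 ^ k) start_state = F' ((F' ^^ (2 ^ k - 1)) start_state)"
    by (metis funpow.simps(2) comp_apply)
  then show ?thesis using F'_funpow_zero_state F'_zero_state by simp
qed

lemma F'_orbit_covers:
  assumes "length y = k" shows "\<exists>j<2 ^ k. (F' ^^ j) start_state = y"
proof (cases "True \<in> set y")
  case True
  then have "y \<in> (\<lambda>j. (F ^^ j) start_state) ` {..<2 ^ k - 1}"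
    unfolding F_orbit_eq_nonzero_states using assms by (simp add: nonzero_states_def)
  then obtain j where "j < 2 ^ k - 1" "(F ^^ j) start_state = y" by (auto simp: image_iff)
  then show ?thesis using F'_funpow_start_state[of j] by (intro exI[of _ j]) simp
next
  case False
  with assms have "y = replicate k False" by (induction y arbitrary: k) auto
  then show ?thesis using F'_funpow_zero_state by (intro exI[of _ "2 ^ k - 1"]) simp
qed

lemma F'_funpow_period: "length x = k \<Longrightarrow> (F' ^^ 2 ^ k) x = x"
  using funpow_cycle_from_any_point(1)[OF F'_orbit_period, of "{y. length y = k}"]
    F'_orbit_covers by blast

lemma F'_funpow_surj: "length x = k \<Longrightarrow> length y = k \<Longrightarrow> \<exists>m<2 ^ k. (F' ^^ m) x = y"
  using funpow_cycle_from_any_point(2)[OF F'_orbit_period, of "{y. length y = k}"]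
    F'_orbit_covers by blast

end

section \<open>Cyclic BWT of a word with all windows distinct\<close>

fun bool_words :: "nat \<Rightarrow> bool list list" where
  "bool_words 0 = [[]]"
| "bool_words (Suc k) = map (Cons False) (bool_words k) @ map (Cons True) (bool_words k)"

lemma length_bool_words: "length (bool_words k) = 2 ^ k"
  by (induction k) auto

lemma set_bool_words: "set (bool_words k) = {v. length v = k}"
proof (induction k)
  case (Suc k)
  show ?case
  proof (intro set_eqI iffI)
    fix v :: "bool list" assume "v \<in> {v. length v = Suc k}"
    then obtain b r where "v = b # r" "length r = k" by (cases v) auto
    then show "v \<in> set (bool_words (Suc k))" using Suc by (cases b) auto
  qed (use Suc in auto)
qed simp

lemma sorted_wrt_bool_words: "sorted_wrt (<) (bool_words k)"
  by (induction k) (auto simp: sorted_wrt_append sorted_wrt_map)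

lemma distinct_bool_words: "distinct (bool_words k)"
  using sorted_wrt_bool_words strict_sorted_iff by blast

lemma bool_words_Suc_last_two:
  "\<exists>ws. bool_words (Suc k) = ws @ [replicate k True @ [False], replicate (Suc k) True]"
proof (induction k)
  case (Suc k)
  then obtain ws where "bool_words (Suc k) = ws @ [replicate k True @ [False], replicate (Suc k) True]" ..
  then show ?case
    by (intro exI[of _ "map (Cons False) (bool_words (Suc k)) @ map (Cons True) ws"])
      (simp del: bool_words.simps(2) add: bool_words.simps(2)[of "Suc k"])
qed simp

lemma less_if_take_less:
  fixes xs ys :: "'a::ord list"
  assumes "take n xs < take n ys" "length xs = length ys"
  shows "xs < ys"
proof -
  have "(take n xs @ drop n xs, take n ys @ drop n ys) \<in> lexord {(u, v). u < v}"
    using assms by (intro lexord_sufI) (simp_all add: list_less_def)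
  then show ?thesis by (simp add: list_less_def)
qed

lemma mset_eq_mset_upt_if_distinct:
  assumes "distinct ns" "length ns = n" "set ns \<subseteq> {0..<n}"
  shows "mset ns = mset [0..<n]"
proof -
  have "set ns = {0..<n}"
    using assms distinct_card[of ns] by (intro card_subset_eq) simp_all
  then have "set ns = set [0..<n]" by simp
  then show ?thesis by (rule iffD1[OF set_eq_iff_mset_eq_distinct[OF assms(1) distinct_upt]])
qed

lemma sort_rotations_by_prefix_index:
  assumes len: "length u = 2 ^ k"
    and idx: "\<And>v. length v = k \<Longrightarrow> idx v < length u \<and> take k (rotate (idx v) u) = v"
  shows "sort (map (\<lambda>i. rotate i u) [0..<length u]) = map (\<lambda>v. rotate (idx v) u) (bool_words k)"
proof -
  let ?rows = "map (\<lambda>v. rotate (idx v) u) (bool_words k)"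
  have "inj_on idx (set (bool_words k))"
  proof (rule inj_onI)
    fix v w assume v: "v \<in> set (bool_words k)" and w: "w \<in> set (bool_words k)"
      and eq: "idx v = idx w"
    have "v = take k (rotate (idx v) u)" using idx v by (simp add: set_bool_words)
    also have "\<dots> = take k (rotate (idx w) u)" by (simp only: eq)
    also have "\<dots> = w" using idx w by (simp add: set_bool_words)
    finally show "v = w" .
  qed
  then have "distinct (map idx (bool_words k))"
    by (simp add: distinct_map distinct_bool_words)
  then have idx_perm: "mset (map idx (bool_words k)) = mset [0..<length u]"
    using idx by (intro mset_eq_mset_upt_if_distinct) (auto simp: length_bool_words len set_bool_words)
  have "mset ?rows = image_mset (\<lambda>i. rotate i u) (mset (map idx (bool_words k)))"
    by (simp add: image_mset.compositionality comp_def)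
  also have "\<dots> = mset (map (\<lambda>i. rotate i u) [0..<length u])"
    by (subst idx_perm) simp
  finally have "mset ?rows = mset (map (\<lambda>i. rotate i u) [0..<length u])" .
  moreover have "sorted ?rows"
    unfolding sorted_map
  proof (rule sorted_wrt_mono_rel[OF _ sorted_wrt_bool_words])
    fix v w assume "v \<in> set (bool_words k)" "w \<in> set (bool_words k)" "v < w"
    then have "take k (rotate (idx v) u) < take k (rotate (idx w) u)"
      using idx by (simp add: set_bool_words)
    then have "rotate (idx v) u < rotate (idx w) u" by (rule less_if_take_less) simp
    then show "rotate (idx v) u \<le> rotate (idx w) u" by (rule less_imp_le)
  qed
  ultimately show ?thesis by (rule properties_for_sort)
qed

lemma cBWT_eq_map_bool_words:
  assumes len: "length u = 2 ^ k"
    and windows: "\<And>v. length v = k \<Longrightarrow>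
      \<exists>i<length u. take k (rotate i u) = v \<and> last (rotate i u) = f v"
  shows "cBWT u = map f (bool_words k)"
proof -
  have "\<forall>v. \<exists>i. length v = k \<longrightarrow>
      i < length u \<and> take k (rotate i u) = v \<and> last (rotate i u) = f v"
    using windows by blast
  then obtain idx where "\<forall>v. length v = k \<longrightarrow>
      idx v < length u \<and> take k (rotate (idx v) u) = v \<and> last (rotate (idx v) u) = f v"
    by (rule choice[THEN exE])
  then have idx: "\<And>v. length v = k \<Longrightarrow>
      idx v < length u \<and> take k (rotate (idx v) u) = v \<and> last (rotate (idx v) u) = f v"
    by blast
  then have "sort (map (\<lambda>i. rotate i u) [0..<length u]) = map (\<lambda>v. rotate (idx v) u) (bool_words k)"
    using len by (intro sort_rotations_by_prefix_index) auto
  moreover have "map (\<lambda>v. last (rotate (idx v) u)) (bool_words k) = map f (bool_words k)"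
    using idx by (simp add: set_bool_words)
  ultimately show ?thesis by (simp add: cBWT_def)
qed

section \<open>The letters of the cyclic BWT of M_k\<close>

lemma rotate_orbit_word:
  assumes "(f ^^ n) x = x"
  shows "rotate s (map (\<lambda>t. h ((f ^^ t) x)) [0..<n]) = map (\<lambda>t. h ((f ^^ (s + t)) x)) [0..<n]"
proof (rule nth_equalityI)
  fix j assume "j < length (rotate s (map (\<lambda>t. h ((f ^^ t) x)) [0..<n]))"
  then have "j < n" by simp
  then show "rotate s (map (\<lambda>t. h ((f ^^ t) x)) [0..<n]) ! j =
      map (\<lambda>t. h ((f ^^ (s + t)) x)) [0..<n] ! j"
    by (simp add: nth_rotate funpow_mod_eq[OF assms])
qed simp

lemma ex_rotate_rev_eq_rev_rotate:
  assumes "xs \<noteq> []" shows "\<exists>i<length xs. rotate i (rev xs) = rev (rotate s xs)"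
proof -
  let ?n = "length xs"
  define i where "i = (?n - s mod ?n) mod ?n"
  have "(?n - i mod ?n) mod ?n = s mod ?n"
    using assms by (cases "s mod ?n = 0") (simp_all add: i_def)
  then have "rotate i (rev xs) = rev (rotate s xs)"
    by (metis rotate_rev rotate_conv_mod)
  moreover have "i < ?n" using assms by (simp add: i_def)
  ultimately show ?thesis by blast
qed

(* The letter cyclically preceding an occurrence of v in M_word is the complement of the letter
   of dB_word following the window rev (map Not v), i.e. of the feedback bit of F' there. *)
definition bwt_letter :: "nat \<Rightarrow> bool list \<Rightarrow> bool" where
  "bwt_letter k v = (\<not> last (lfsr_F' k (rev (map Not v))))"

definition last_two_agree :: "bool list \<Rightarrow> bool" where
  "last_two_agree v \<longleftrightarrow> (last v \<longleftrightarrow> last (butlast v))"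

lemma last_two_agree_snoc2 [simp]: "last_two_agree (xs @ [a, b]) \<longleftrightarrow> (b \<longleftrightarrow> a)"
  by (simp add: last_two_agree_def butlast_append)

lemma last_two_agree_Cons: "2 \<le> length v \<Longrightarrow> last_two_agree (b # v) = last_two_agree v"
  by (cases v rule: rev_cases) (auto simp: last_two_agree_def butlast_append)

lemma map_last_two_agree_bool_words:
  "map last_two_agree (bool_words (Suc (Suc k))) = concat (replicate (2 ^ k) [True, False, False, True])"
proof (induction k)
  case 0
  then show ?case by (simp add: last_two_agree_def)
next
  case (Suc k)
  have "map last_two_agree (bool_words (Suc (Suc (Suc k))))
      = map last_two_agree (bool_words (Suc (Suc k))) @ map last_two_agree (bool_words (Suc (Suc k)))"
    by (simp add: comp_def last_two_agree_Cons set_bool_words cong: map_cong)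
  then show ?case by (simp del: bool_words.simps add: Suc.IH mult_2 replicate_add)
qed

lemma Cons_concat_replicate_snoc:
  "x # concat (replicate n (xs @ [x])) = concat (replicate n (x # xs)) @ [x]"
  by (induction n) auto

context primitive_trinomial_lfsr
begin

lemma M_word_windows:
  assumes x0: "length x0 = k" and v: "length v = k"
  shows "\<exists>i<2 ^ k. take k (rotate i (M_word k x0)) = v \<and>
      last (rotate i (M_word k x0)) = bwt_letter k v"
proof -
  define c where "c t = hd ((F' ^^ t) x0)" for t
  define y where "y = rev (map Not v)"
  have "length y = k" using v by (simp add: y_def)
  then obtain m where "m < 2 ^ k" and m: "(F' ^^ m) x0 = y" using F'_funpow_surj[OF x0] by blast
  have period: "c (t + 2 ^ k) = c t" for t
    by (simp add: c_def funpow_add F'_funpow_period[OF x0])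
  have "dB_word k x0 \<noteq> []" by (simp add: dB_word_def)
  then obtain i where "i < 2 ^ k"
    and i: "rotate i (rev (dB_word k x0)) = rev (rotate (m + k) (dB_word k x0))"
    using ex_rotate_rev_eq_rev_rotate[of "dB_word k x0" "m + k"] by (auto simp: dB_word_def)
  have "rotate (m + k) (dB_word k x0) = map (\<lambda>t. c (m + k + t)) [0..<2 ^ k]"
    unfolding dB_word_def c_def by (rule rotate_orbit_word[OF F'_funpow_period[OF x0]])
  then have rot: "rotate i (M_word k x0) = map Not (rev (map (\<lambda>t. c (m + k + t)) [0..<2 ^ k]))"
    using i by (simp add: M_word_def rotate_map)
  then have rot_nth: "rotate i (M_word k x0) ! j = (\<not> c (m + k + (2 ^ k - 1 - j)))" if "j < 2 ^ k" for j
    using that by (simp add: rev_nth)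
  have "take k (rotate i (M_word k x0)) = v"
  proof (rule nth_equalityI)
    fix j assume "j < length (take k (rotate i (M_word k x0)))"
    then have "j < k" by (simp add: rot)
    moreover have "k < 2 ^ k" by (rule less_exp)
    ultimately have j: "j < k" "j < 2 ^ k" by linarith+
    have "c (m + k + (2 ^ k - 1 - j)) = c (m + (k - 1 - j))"
      using period[of "m + (k - 1 - j)"] j by (simp add: algebra_simps)
    also have "\<dots> = y ! (k - 1 - j)"
      unfolding c_def using F'.nth_funpow[OF x0, of "k - 1 - j" m] m j by simp
    also have "\<dots> = (\<not> v ! j)" using v j by (simp add: y_def rev_nth)
    finally show "take k (rotate i (M_word k x0)) ! j = v ! j" using j rot_nth by simp
  qed (use v four_le_two_pow rot in simp)
  moreover have "last (rotate i (M_word k x0)) = (\<not> c (m + k))"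
    using rot_nth[of "2 ^ k - 1"] by (simp add: rot last_conv_nth)
  moreover have "c (m + k) = last (F' y)"
    using F'.hd_funpow_add[OF x0, of m] m by (simp add: c_def)
  ultimately show ?thesis using \<open>i < 2 ^ k\<close> by (auto simp: bwt_letter_def y_def)
qed

lemma bwt_letter_eq_last_two_agree:
  assumes v: "length v = k" "v \<noteq> replicate k True" "v \<noteq> replicate (k - 1) True @ [False]"
  shows "bwt_letter k v = last_two_agree v"
proof -
  define y where "y = rev (map Not v)"
  have v_y: "v = map Not (rev y)" by (simp add: y_def rev_map comp_def)
  have "y \<noteq> replicate k False" "y \<noteq> conj_state"
    using v(2,3) by (auto simp: v_y conj_state_def)
  then have "bwt_letter k v = (\<not> last (F y))" by (simp add: bwt_letter_def y_def F'_eq_F)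
  moreover obtain b a r where "rev v = b # a # r"
    using v(1) two_le_k by (cases "rev v"; cases "tl (rev v)") auto
  then have "v = rev r @ [a, b]" "y = (\<not> b) # (\<not> a) # map Not r"
    by (simp_all add: y_def rev_map rev_swap)
  ultimately show ?thesis by (simp add: lfsr_F_def)
qed

lemma bwt_letter_all_true: "bwt_letter k (replicate k True) = False"
  using F'_zero_state by (simp add: bwt_letter_def start_state_def)

lemma bwt_letter_conj_state: "bwt_letter k (replicate (k - 1) True @ [False]) = True"
proof -
  have "rev (map Not (replicate (k - 1) True @ [False])) = conj_state" by (simp add: conj_state_def)
  then show ?thesis using F'_conj_state two_le_k by (simp add: bwt_letter_def)
qed

lemma map_bwt_letter_bool_words:
  "map (bwt_letter k) (bool_words k) =
    [True] @ concat (replicate (2 ^ (k - 2) - 1) [False, False, True, True]) @ [False, True, False]"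
proof -
  define n :: nat where "n = 2 ^ (k - 2) - 1"
  define a where "a = replicate (k - 1) True @ [False]"
  define b where "b = replicate k True"
  have "Suc (k - 1) = k" using two_le_k by simp
  then obtain ws where ws: "bool_words k = ws @ [a, b]"
    using bool_words_Suc_last_two[of "k - 1"] by (auto simp: a_def b_def)
  have "map (bwt_letter k) ws = map last_two_agree ws"
  proof (rule map_cong[OF refl])
    fix v assume "v \<in> set ws"
    then have "length v = k" "v \<noteq> a" "v \<noteq> b"
      using distinct_bool_words[of k] set_bool_words[of k] by (auto simp: ws)
    then show "bwt_letter k v = last_two_agree v"
      by (simp add: bwt_letter_eq_last_two_agree a_def b_def)
  qed
  moreover have "map last_two_agree ws = concat (replicate n [True, False, False, True]) @ [True, False]"
  proof -
    obtain m where "k = Suc (Suc m)" using two_le_k by (metis add_2_eq_Suc le_Suc_ex)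
    then have "a = replicate m True @ [True, False]" "b = replicate m True @ [True, True]"
      by (simp_all add: a_def b_def replicate_app_Cons_same)
    then have "last_two_agree a = False" "last_two_agree b = True" by simp_all
    moreover have "2 ^ (k - 2) = Suc n" by (simp add: n_def)
    moreover have "Suc (Suc (k - 2)) = k" using two_le_k by simp
    ultimately have "map last_two_agree ws @ [False, True] =
        concat (replicate n [True, False, False, True]) @ [True, False, False, True]"
      using map_last_two_agree_bool_words[of "k - 2"] by (simp add: ws replicate_append_same[symmetric])
    then show ?thesis by simp
  qed
  ultimately have "map (bwt_letter k) (bool_words k) =
      concat (replicate n [True, False, False, True]) @ [True, False, True, False]"
    using bwt_letter_conj_state bwt_letter_all_true by (simp add: ws a_def b_def)
  then show ?thesis
    using Cons_concat_replicate_snoc[of True n "[False, False, True]"] by (simp add: n_def)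
qed

end

theorem theorem2:
  fixes k :: nat and x0 :: "bool list"
  assumes "k \<ge> 2"
    and "primitive_F2 (trinomial k)"
    and "length x0 = k"
  shows "cBWT (M_word k x0) =
    [True] @ concat (replicate (2 ^ (k - 2) - 1) [False, False, True, True]) @ [False, True, False]"
proof -
  interpret primitive_trinomial_lfsr k using assms(1,2) by unfold_locales
  have "length (M_word k x0) = 2 ^ k" by (simp add: M_word_def dB_word_def)
  then have "cBWT (M_word k x0) = map (bwt_letter k) (bool_words k)"
    using M_word_windows[OF assms(3)] by (intro cBWT_eq_map_bool_words) auto
  then show ?thesis by (simp add: map_bwt_letter_bool_words)
qed

end
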